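(* Let $N>20$ be an integer and let $w$ be the weight defined below. Then there are absolute constants $0<c_1\le c_2$, $c_3>0$ (independent of $N$) such that $\int_0^1w=1$, $c_1N\le[w]_{A_1}\le c_2N$, and $\sum_{k=2}^N|I_k|\ge c_3N^2$ with $w(x)>x$ for all $x\in I_k$, $2\le k\le N$; in particular $|\{x\in(1,\infty):w(x)>x\}|\ge c_3N^2$.
   Context: Construction. For $k=2,\dots,N$ let $J_k=[2^k,2^{k+1})$, $I_k=[2^k,2^k+k)$, $L_k=[2^k+k,2^{k+1})$, $\ell_k=(2^k-k)/2$ (half the length of $L_k$) and $c_k=2^k+k+\ell_k$ (the center of $L_k$). For $j=1,\dots,k-1$ set $(L_k^-)^j=[c_k-\ell_k(1-2^{-j}),\,c_k-\ell_k(1-2^{-(j-1)}))$ and $(L_k^+)^j=[c_k+\ell_k(1-2^{-(j-1)}),\,c_k+\ell_k(1-2^{-j}))$, and set $(L_k^-)^k=[2^k+k,\,2^k+k+\ell_k2^{-(k-1)})$, $(L_k^+)^k=[2^{k+1}-\ell_k2^{-(k-1)},\,2^{k+1})$. These intervals, together with $I_k$, partition $J_k$; $|(L_k^\pm)^j|=(2^k-k)2^{-(j+1)}$ for $j<k$ and $|(L_k^\pm)^k|=(2^k-k)2^{-k}$. Define $w_k=2^{k+1}\chi_{I_k}+\sum_{j=1}^k2^j\chi_{(L_k^-)^j\cup(L_k^+)^j}$. Define $w$ on $[0,2^{N+2}]$ by $w(x)=\chi_{[0,4)}(x)+\sum_{k=2}^Nw_k(x)$ for $x\in[0,2^{N+1})$,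 $w(2^{N+1})=2^N$, and $w(x)=w(2^{N+2}-x)$ for $x\in[2^{N+1},2^{N+2}]$, and extend $w$ to $\mathbb{R}$ periodically with period $2^{N+2}$. A weight $w\ge0$ on $\mathbb{R}$ is in $A_1$ if $\frac1{|I|}\int_Iw\le C\operatorname{ess\,inf}_Iw$ for all intervals $I$; $[w]_{A_1}$ is the least such $C$. *)

theory Defs
  imports "HOL-Analysis.Analysis"
begin

text \<open>The intervals of the construction, for k \<ge> 2 and 1 \<le> j \<le> k.\<close>

definition Iint :: "nat \<Rightarrow> real set" where
  "Iint k = {2^k ..< 2^k + real k}"

definition ell :: "nat \<Rightarrow> real" where
  "ell k = (2^k - real k) / 2"

definition ctr :: "nat \<Rightarrow> real" where
  "ctr k = 2^k + real k + ell k"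

definition Lminus :: "nat \<Rightarrow> nat \<Rightarrow> real set" where
  "Lminus k j = (if j < k
     then {ctr k - ell k * (1 - (1/2)^j) ..< ctr k - ell k * (1 - (1/2)^(j-1))}
     else {2^k + real k ..< 2^k + real k + ell k * (1/2)^(k-1)})"

definition Lplus :: "nat \<Rightarrow> nat \<Rightarrow> real set" where
  "Lplus k j = (if j < k
     then {ctr k + ell k * (1 - (1/2)^(j-1)) ..< ctr k + ell k * (1 - (1/2)^j)}
     else {2^(k+1) - ell k * (1/2)^(k-1) ..< 2^(k+1)})"

definition wk :: "nat \<Rightarrow> real \<Rightarrow> real" where
  "wk k x = 2^(k+1) * indicator (Iint k) x
     + (\<Sum>j=1..k. 2^j * indicator (Lminus k j \<union> Lplus k j) x)"

definition wbase :: "nat \<Rightarrow> real \<Rightarrow> real" where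
  "wbase N x = indicator {0..<4} x + (\<Sum>k=2..N. wk k x)"

text \<open>The weight on [0, 2^(N+2)], reflected, extended periodically with period 2^(N+2).\<close>
definition wN :: "nat \<Rightarrow> real \<Rightarrow> real" where
  "wN N x = (let P = (2::real)^(N+2); y = x - P * of_int \<lfloor>x / P\<rfloor> in
     if y < 2^(N+1) then wbase N y
     else if y = 2^(N+1) then 2^N
     else wbase N (P - y))"

definition essinf_on :: "real \<Rightarrow> real \<Rightarrow> (real \<Rightarrow> real) \<Rightarrow> real" where
  "essinf_on a b w = Sup {z. AE x in lborel. x \<in> {a..b} \<longrightarrow> z \<le> w x}"

text \<open>The A_1 constant: least C with average over every interval \<le> C * essinf
  (infinity if there is no such C).\<close>
definition A1_const :: "(real \<Rightarrow> real) \<Rightarrow> ereal" where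
  "A1_const w = Inf {ereal C | C. \<forall>a b. a < b \<longrightarrow>
       (LINT x:{a..b}|lborel. w x) / (b - a) \<le> C * essinf_on a b w}"

end

(* On the block [2^k, 2^(k+1)) the weight is 2^(k+1) on I_k, and on L_k it equals 2^j at
   distance about ell_k 2^(-j) from the ends of L_k.  Hence at every point t, for every piece P
   of the construction of height v, either v <= 16 w(t) or v |P| <= 16 w(t) dist(t, P) (up to the
   factor k for P = I_k).  An interval [a, b] in [0, 2^(N+1)] either meets at most two blocks, or
   is comparable in length to b, in which case the total mass O(N b) below b suffices; in both cases
   the integral over [a, b] is O(N w(t) (b - a)) for every t in [a, b].  Periodicity and reflection
   extend this to all intervals, so [w]_A1 = O(N).  Conversely the average over [0, 2^N + N] is at
   least N because of the spike on I_N, while w = 1 near 0.  Finally w >= 2^(k+1) > x on I_k. *)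

theory Submission
  imports Defs
begin

lemma wbase_measurable [measurable]: "wbase N \<in> borel_measurable borel"
  unfolding wbase_def wk_def Iint_def Lminus_def Lplus_def by measurable

lemma wN_measurable [measurable]: "wN N \<in> borel_measurable borel"
  unfolding wN_def Let_def by measurable

subsection \<open>Arithmetic of the construction\<close>

lemma real_lt_two_power: "real k < 2^k"
  by (metis of_nat_less_numeral_power_cancel_iff less_exp)

lemma two_power_mono: "j \<le> k \<Longrightarrow> (2::real)^j \<le> 2^k"
  by (rule power_increasing) auto

lemma double_le_two_power: "1 \<le> k \<Longrightarrow> 2 * real k \<le> 2^k"
proof (induction k rule: dec_induct)
  case (step k)
  then show ?case using two_power_mono[of 1 k] by simp
qed simp

lemma ell_ge: "1 \<le> k \<Longrightarrow> 2^k / 4 \<le> ell k"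
  using double_le_two_power[of k] unfolding ell_def by simp

lemma ell_le: "ell k \<le> 2^k / 2"
  unfolding ell_def by simp

lemma ell_pos: "1 \<le> k \<Longrightarrow> 0 < ell k"
  using ell_ge[of k] zero_less_power[of "2::real" k] by linarith

lemma ell_mono: "ell k \<le> ell (Suc k)"
  unfolding ell_def using real_lt_two_power[of k] by simp

lemma ctr_add_ell: "ctr k + ell k = 2^(k+1)"
  unfolding ctr_def ell_def by simp

lemma ell_pred_ge: "2 \<le> k \<Longrightarrow> 2^k / 8 \<le> ell (k - 1)"
  using ell_ge[of "k - 1"] power_Suc[of "2::real" "k - 1"] by (cases k) auto

lemma ctr_pred: "1 \<le> k \<Longrightarrow> ctr (k - 1) = 2^k - ell (k - 1)"
  using ctr_add_ell[of "k - 1"] by simp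

text \<open>\<open>Ltail k j\<close> is the length of \<open>(L\<^sub>k\<^sup>-)\<^sup>j \<union> \<dots> \<union> (L\<^sub>k\<^sup>-)\<^sup>k\<close>, an interval
  starting at \<open>2^k + k\<close>; the piece \<open>(L\<^sub>k\<^sup>-)\<^sup>j\<close> is its upper half (all of it for \<open>j = k\<close>).
  Mirror-symmetrically for \<open>L\<^sub>k\<^sup>+\<close>, ending at \<open>2^(k+1)\<close>.\<close>

definition Ltail :: "nat \<Rightarrow> nat \<Rightarrow> real" where
  "Ltail k j = ell k * (1/2)^(j - 1)"

lemma Lminus_eq:
  assumes "1 \<le> j" "j \<le> k"
  shows "Lminus k j = {2^k + k + (if j < k then Ltail k j / 2 else 0) ..< 2^k + k + Ltail k j}"
proof -
  obtain i where j: "j = Suc i" using assms by (cases j) auto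
  show ?thesis
  proof (cases "j < k")
    case True
    then show ?thesis unfolding Lminus_def Ltail_def ctr_def j by (auto simp: algebra_simps)
  next
    case False
    then show ?thesis using assms unfolding Lminus_def Ltail_def ctr_def j by auto
  qed
qed

lemma Lplus_eq:
  assumes "1 \<le> j" "j \<le> k"
  shows "Lplus k j = {2^(k+1) - Ltail k j ..< 2^(k+1) - (if j < k then Ltail k j / 2 else 0)}"
proof -
  obtain i where j: "j = Suc i" using assms by (cases j) auto
  have c: "ctr k + ell k = 2^(k+1)" by (rule ctr_add_ell)
  show ?thesis
  proof (cases "j < k")
    case True
    have "ctr k + ell k * (1 - (1/2)^i) = 2^(k+1) - ell k * (1/2)^i"
      "ctr k + ell k * (1 - (1/2)^(Suc i)) = 2^(k+1) - ell k * (1/2)^i / 2"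
      using c by (simp_all add: algebra_simps)
    then show ?thesis using True unfolding Lplus_def Ltail_def j by auto
  next
    case False
    then show ?thesis using assms unfolding Lplus_def Ltail_def j by auto
  qed
qed

lemma Ltail_pos: "1 \<le> k \<Longrightarrow> 0 < Ltail k j"
  unfolding Ltail_def using ell_pos by simp

lemma Ltail_le_ell: "Ltail k j \<le> ell k"
  unfolding Ltail_def ell_def using real_lt_two_power[of k]
  by (simp add: mult_left_le power_le_one)

lemma Ltail_first: "Ltail k 1 = ell k"
  by (simp add: Ltail_def)

lemma Ltail_Suc: "1 \<le> j \<Longrightarrow> Ltail k (Suc j) = Ltail k j / 2"
  unfolding Ltail_def by (cases j) auto

lemma two_power_mult_Ltail: "1 \<le> j \<Longrightarrow> 2^j * Ltail k j = 2 * ell k"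
  by (cases j) (auto simp: Ltail_def power_one_over field_simps)

lemma Iint_subset_block: "Iint k \<subseteq> {2^k..<2^(k+1)}"
  unfolding Iint_def using real_lt_two_power[of k] by auto

lemma Lminus_subset_left_tail:
  "1 \<le> j \<Longrightarrow> j \<le> k \<Longrightarrow> Lminus k j \<subseteq> {2^k + real k ..< 2^k + real k + Ltail k j}"
  using Lminus_eq[of j k] Ltail_pos[of k j] by auto

lemma Lplus_subset_right_tail:
  "1 \<le> j \<Longrightarrow> j \<le> k \<Longrightarrow> Lplus k j \<subseteq> {2^(k+1) - Ltail k j ..< 2^(k+1)}"
  using Lplus_eq[of j k] Ltail_pos[of k j] by auto

lemma L_subset_block:
  assumes "2 \<le> k" "1 \<le> j" "j \<le> k"
  shows "Lminus k j \<subseteq> {2^k..<2^(k+1)}" "Lplus k j \<subseteq> {2^k..<2^(k+1)}"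
proof -
  have "0 < ell k" using ell_pos assms(1) by simp
  then have "2^k + real k + Ltail k j \<le> 2^(k+1)" "2^k \<le> 2^(k+1) - Ltail k j"
    using Ltail_le_ell[of k j] ctr_add_ell[of k] unfolding ctr_def by simp_all
  then show "Lminus k j \<subseteq> {2^k..<2^(k+1)}" "Lplus k j \<subseteq> {2^k..<2^(k+1)}"
    using Lminus_subset_left_tail[of j k] Lplus_subset_right_tail[of j k] assms by auto
qed

lemma wk_nonneg: "0 \<le> wk k t"
  unfolding wk_def by (intro add_nonneg_nonneg sum_nonneg) (auto simp: indicator_def)

lemma wbase_nonneg: "0 \<le> wbase N t"
  unfolding wbase_def by (intro add_nonneg_nonneg sum_nonneg) (auto simp: wk_nonneg)

lemma wk_le_wbase: "k \<in> {2..N} \<Longrightarrow> wk k t \<le> wbase N t"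
  unfolding wbase_def using member_le_sum[of k "{2..N}" "\<lambda>k. wk k t"] wk_nonneg
  by (simp add: indicator_def)

lemma wbase_ge_Iint:
  assumes "2 \<le> k" "k \<le> N" "t \<in> Iint k"
  shows "2^(k+1) \<le> wbase N t"
proof -
  have "2^(k+1) \<le> wk k t"
    unfolding wk_def using assms(3) by (auto intro!: sum_nonneg)
  with wk_le_wbase[of k N t] assms show ?thesis by auto
qed

lemma wbase_ge_piece:
  assumes "2 \<le> k" "k \<le> N" "1 \<le> j" "j \<le> k" "t \<in> Lminus k j \<union> Lplus k j"
  shows "2^j \<le> wbase N t"
proof -
  have "(2::real)^j = 2^j * indicator (Lminus k j \<union> Lplus k j) t" using assms(5) by simp
  also have "\<dots> \<le> (\<Sum>i=1..k. 2^i * indicator (Lminus k i \<union> Lplus k i) t)"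
    by (rule member_le_sum) (use assms in auto)
  also have "\<dots> \<le> wk k t" unfolding wk_def by simp
  finally show ?thesis using wk_le_wbase[of k N t] assms by auto
qed

text \<open>A point of the tail \<open>j\<close> lies either in the piece \<open>j\<close> or in the tail \<open>j + 1\<close>.\<close>

lemma wbase_ge_left_tail:
  assumes k: "2 \<le> k" "k \<le> N" and j: "1 \<le> j" "j \<le> k"
    and t: "2^k + real k \<le> t" "t < 2^k + real k + Ltail k j"
  shows "2^j \<le> wbase N t"
  using j t
proof (induction "k - j" arbitrary: j rule: less_induct)
  case less
  show ?case
  proof (cases "j < k \<and> t < 2^k + real k + Ltail k (Suc j)")
    case True
    then have "2^(Suc j) \<le> wbase N t" using less.hyps[of "Suc j"] less.prems by auto
    moreover have "(2::real)^j \<le> 2^(Suc j)" by simp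
    ultimately show ?thesis by linarith
  next
    case False
    then have "t \<in> Lminus k j" using less Lminus_eq[of j k] Ltail_Suc[of j k] by auto
    then show ?thesis using wbase_ge_piece k less by blast
  qed
qed

lemma wbase_ge_right_tail:
  assumes k: "2 \<le> k" "k \<le> N" and j: "1 \<le> j" "j \<le> k"
    and t: "2^(k+1) - Ltail k j \<le> t" "t < 2^(k+1)"
  shows "2^j \<le> wbase N t"
  using j t
proof (induction "k - j" arbitrary: j rule: less_induct)
  case less
  show ?case
  proof (cases "j < k \<and> 2^(k+1) - Ltail k (Suc j) \<le> t")
    case True
    then have "2^(Suc j) \<le> wbase N t" using less.hyps[of "Suc j"] less.prems by auto
    moreover have "(2::real)^j \<le> 2^(Suc j)" by simp
    ultimately show ?thesis by linarith
  next
    case False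
    then have "t \<in> Lplus k j" using less Lplus_eq[of j k] Ltail_Suc[of j k] by auto
    then show ?thesis using wbase_ge_piece k less by blast
  qed
qed

lemma exists_Ltail_scale_lt:
  assumes "0 \<le> s" "s < ell k" "1 \<le> m"
  shows "\<exists>j. 1 \<le> j \<and> j \<le> m \<and> s < Ltail k j \<and> (j = m \<or> Ltail k (Suc j) \<le> s)"
  using assms(3)
proof (induction m rule: dec_induct)
  case base
  then show ?case using assms by (intro exI[of _ 1]) (simp add: Ltail_def)
next
  case (step m)
  then obtain j where j: "1 \<le> j" "j \<le> m" "s < Ltail k j" "j = m \<or> Ltail k (Suc j) \<le> s"
    by blast
  show ?case
  proof (cases "j = m \<and> s < Ltail k (Suc m)")
    case True
    then show ?thesis using j by (intro exI[of _ "Suc m"]) auto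
  next
    case False
    then show ?thesis using j by (intro exI[of _ j]) auto
  qed
qed

lemma exists_Ltail_scale_le:
  assumes "0 \<le> s" "s \<le> ell k" "1 \<le> m"
  shows "\<exists>j. 1 \<le> j \<and> j \<le> m \<and> s \<le> Ltail k j \<and> (j = m \<or> Ltail k (Suc j) \<le> s)"
  using assms(3)
proof (induction m rule: dec_induct)
  case base
  then show ?case using assms by (intro exI[of _ 1]) (simp add: Ltail_def)
next
  case (step m)
  then obtain j where j: "1 \<le> j" "j \<le> m" "s \<le> Ltail k j" "j = m \<or> Ltail k (Suc j) \<le> s"
    by blast
  show ?case
  proof (cases "j = m \<and> s \<le> Ltail k (Suc m)")
    case True
    then show ?thesis using j by (intro exI[of _ "Suc m"]) auto
  next
    case False
    then show ?thesis using j by (intro exI[of _ j]) auto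
  qed
qed

lemma ell_eq_two_power_mult_Ltail: "ell k = 2^j * Ltail k (Suc j)"
  using two_power_mult_Ltail[of "Suc j" k] by simp

lemma wbase_left_half:
  assumes k: "2 \<le> k" "k \<le> N" and t: "2^k + real k \<le> t" "t < ctr k"
  shows "2^k \<le> wbase N t \<or> ell k \<le> wbase N t * (t - (2^k + real k))"
proof -
  let ?s = "t - (2^k + real k)"
  obtain j where j: "1 \<le> j" "j \<le> k" "?s < Ltail k j" "j = k \<or> Ltail k (Suc j) \<le> ?s"
    using exists_Ltail_scale_lt[of ?s k k] t k unfolding ctr_def by auto
  have w: "2^j \<le> wbase N t"
    by (rule wbase_ge_left_tail[OF k j(1,2)]) (use t j in auto)
  have "ell k \<le> wbase N t * ?s" if "Ltail k (Suc j) \<le> ?s"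
    unfolding ell_eq_two_power_mult_Ltail[of k j]
    by (rule mult_mono[OF w that]) (use wbase_nonneg less_imp_le[OF Ltail_pos] k in auto)
  then show ?thesis using j(4) w by auto
qed

lemma wbase_right_half:
  assumes k: "2 \<le> k" "k \<le> N" and t: "ctr k \<le> t" "t < 2^(k+1)"
  shows "2^k \<le> wbase N t \<or> ell k \<le> wbase N t * (2^(k+1) - t)"
proof -
  let ?s = "2^(k+1) - t"
  obtain j where j: "1 \<le> j" "j \<le> k" "?s \<le> Ltail k j" "j = k \<or> Ltail k (Suc j) \<le> ?s"
    using exists_Ltail_scale_le[of ?s k k] t k ctr_add_ell[of k] by auto
  have w: "2^j \<le> wbase N t"
    by (rule wbase_ge_right_tail[OF k j(1,2)]) (use t j in auto)
  have "ell k \<le> wbase N t * ?s" if "Ltail k (Suc j) \<le> ?s"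
    unfolding ell_eq_two_power_mult_Ltail[of k j]
    by (rule mult_mono[OF w that]) (use wbase_nonneg less_imp_le[OF Ltail_pos] k in auto)
  then show ?thesis using j(4) w by auto
qed

lemma exists_dyadic_block:
  fixes t :: real
  assumes "2 \<le> n" "4 \<le> t" "t < 2^(n+1)"
  shows "\<exists>k. 2 \<le> k \<and> k \<le> n \<and> 2^k \<le> t \<and> t < 2^(k+1)"
  using assms(1,3)
proof (induction n rule: dec_induct)
  case base
  then show ?case using assms(2) by (intro exI[of _ 2]) auto
next
  case (step n)
  then show ?case by (cases "t < 2^(n+1)") (force, auto intro!: exI[of _ "Suc n"])
qed

lemma wbase_ge_two_on_block:
  assumes k: "2 \<le> k" "k \<le> N" and t: "2^k \<le> t" "t < 2^(k+1)"
  shows "2 \<le> wbase N t"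
proof -
  consider "t < 2^k + real k" | "2^k + real k \<le> t" "t < ctr k" | "ctr k \<le> t" by linarith
  then show ?thesis
  proof cases
    case 1
    then have "2^(k+1) \<le> wbase N t" using wbase_ge_Iint k t unfolding Iint_def by auto
    moreover have "(2::real) \<le> 2^(k+1)" using two_power_mono[of 1 "k+1"] by simp
    ultimately show ?thesis by linarith
  next
    case 2
    then show ?thesis using wbase_ge_left_tail[of k N 1 t] k
      unfolding Ltail_first ctr_def by simp
  next
    case 3
    then show ?thesis using wbase_ge_right_tail[of k N 1 t] k t ctr_add_ell[of k]
      unfolding Ltail_first by simp
  qed
qed

lemma wbase_ge_one:
  assumes N: "2 \<le> N" and t: "0 \<le> t" "t < 2^(N+1)"
  shows "1 \<le> wbase N t"
proof (cases "t < 4")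
  case True
  then show ?thesis unfolding wbase_def using t by (auto intro!: sum_nonneg simp: wk_nonneg)
next
  case False
  then obtain k where "2 \<le> k" "k \<le> N" "2^k \<le> t" "t < 2^(k+1)"
    using exists_dyadic_block[OF N _ t(2)] by auto
  then show ?thesis using wbase_ge_two_on_block[of k N t] by simp
qed

lemma wk_eq_0_below:
  assumes "2 \<le> k" "x < 2^k"
  shows "wk k x = 0"
proof -
  have "x \<notin> Lminus k j \<union> Lplus k j" if "j \<in> {1..k}" for j
    using L_subset_block[of k j] assms that by auto
  moreover have "x \<notin> Iint k" using Iint_subset_block[of k] assms by auto
  ultimately show ?thesis unfolding wk_def by simp
qed

lemma wbase_eq_1_below_4: "0 \<le> x \<Longrightarrow> x < 4 \<Longrightarrow> wbase N x = 1"
proof -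
  assume x: "0 \<le> x" "x < 4"
  have "wk k x = 0" if "k \<in> {2..N}" for k
    using wk_eq_0_below[of k x] two_power_mono[of 2 k] that x by auto
  then show ?thesis unfolding wbase_def using x by simp
qed

definition wbase_bound :: "nat \<Rightarrow> real" where
  "wbase_bound N = 1 + (\<Sum>k=2..N. 2^(k+1) + (\<Sum>j=1..k. 2^j))"

lemma wbase_le_bound: "wbase N t \<le> wbase_bound N"
  unfolding wbase_def wk_def wbase_bound_def
  by (intro add_mono sum_mono) (auto simp: indicator_def)

subsection \<open>The periodic weight\<close>

definition wN_on_period :: "nat \<Rightarrow> real \<Rightarrow> real" where
  "wN_on_period N y =
     (if y < 2^(N+1) then wbase N y else if y = 2^(N+1) then 2^N else wbase N (2^(N+2) - y))"

lemma floor_remainder_bounds: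
  fixes x P :: real
  assumes "0 < P"
  shows "0 \<le> x - P * of_int \<lfloor>x / P\<rfloor>" "x - P * of_int \<lfloor>x / P\<rfloor> < P"
  using floor_divide_lower[OF assms, of x] floor_divide_upper[OF assms, of x]
  by (simp_all add: algebra_simps)

lemma wN_eq_on_period: "wN N x = wN_on_period N (x - 2^(N+2) * of_int \<lfloor>x / 2^(N+2)\<rfloor>)"
  unfolding wN_def wN_on_period_def Let_def by simp

lemma wN_periodic: "wN N (x + of_int n * 2^(N+2)) = wN N x"
proof -
  have "(x + of_int n * 2^(N+2)) / 2^(N+2) = x / 2^(N+2) + of_int n"
    by (simp add: field_simps)
  then have "\<lfloor>(x + of_int n * 2^(N+2)) / 2^(N+2)\<rfloor> = \<lfloor>x / 2^(N+2)\<rfloor> + n" by simp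
  then show ?thesis unfolding wN_eq_on_period by (simp add: algebra_simps)
qed

lemma wN_minus: "wN N (-x) = wN N x"
proof -
  define P :: real where "P = 2^(N+2)"
  define m where "m = \<lfloor>x / P\<rfloor>"
  define y where "y = x - P * of_int m"
  have P: "0 < P" unfolding P_def by simp
  have y: "0 \<le> y" "y < P" using floor_remainder_bounds[OF P, of x] unfolding y_def m_def by auto
  show ?thesis
  proof (cases "y = 0")
    case True
    then have "-x = 0 + of_int (-m) * 2^(N+2)" "x = 0 + of_int m * 2^(N+2)"
      unfolding y_def P_def by simp_all
    then show ?thesis by (metis wN_periodic)
  next
    case False
    have "x / P = of_int m + y / P" unfolding y_def using P by (simp add: field_simps)
    moreover have "0 < y / P" "y / P < 1" using False y P by auto
    ultimately have "\<lfloor>-x / P\<rfloor> = -m - 1" by (subst floor_eq_iff) simp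
    then have "-x - P * of_int \<lfloor>-x / P\<rfloor> = -x - P * (of_int (-m - 1))" by (simp only:)
    then have "-x - P * of_int \<lfloor>-x / P\<rfloor> = P - y" unfolding y_def by (simp add: algebra_simps)
    then have "wN N (-x) = wN_on_period N (P - y)"
      unfolding wN_eq_on_period P_def[symmetric] by simp
    also have "\<dots> = wN_on_period N y"
      unfolding wN_on_period_def using False y unfolding P_def by auto
    also have "\<dots> = wN N x" unfolding wN_eq_on_period P_def[symmetric] m_def[symmetric] y_def ..
    finally show ?thesis .
  qed
qed

lemma wN_reflect: "wN N (of_int q * 2^(N+2) - x) = wN N x"
  using wN_periodic[of N "-x" q] wN_minus[of N x] by simp

lemma wN_eq_wbase: "0 \<le> t \<Longrightarrow> t < 2^(N+1) \<Longrightarrow> wN N t = wbase N t"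
proof -
  assume t: "0 \<le> t" "t < 2^(N+1)"
  then have "\<lfloor>t / 2^(N+2)\<rfloor> = 0" by (simp add: floor_eq_iff)
  then show ?thesis unfolding wN_eq_on_period wN_on_period_def using t by simp
qed

lemma wN_half_period: "wN N (2^(N+1)) = 2^N"
proof -
  have "\<lfloor>(2::real)^(N+1) / 2^(N+2)\<rfloor> = 0" by (simp add: floor_eq_iff)
  then show ?thesis unfolding wN_eq_on_period wN_on_period_def by simp
qed

lemma wN_period_multiple: "wN N (of_int q * 2^(N+2)) = 1"
  using wN_periodic[of N 0 q] wN_eq_wbase[of 0 N] wbase_eq_1_below_4[of 0 N] by simp

lemma wN_ge_one:
  assumes N: "2 \<le> N"
  shows "1 \<le> wN N x"
proof -
  define y where "y = x - 2^(N+2) * of_int \<lfloor>x / 2^(N+2)\<rfloor>"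
  have y: "0 \<le> y" "y < 2^(N+2)" using floor_remainder_bounds[of "2^(N+2)" x] unfolding y_def by auto
  have "(1::real) \<le> 2^N" by simp
  then show ?thesis unfolding wN_eq_on_period y_def[symmetric] wN_on_period_def
    using wbase_ge_one[OF N] y by auto
qed

lemma wN_nonneg: "2 \<le> N \<Longrightarrow> 0 \<le> wN N x"
  using wN_ge_one[of N x] by simp

lemma wN_bounded: "wN N x \<le> 2^N + wbase_bound N"
proof -
  have "0 \<le> wbase_bound N" using wbase_le_bound[of N 0] wbase_nonneg[of N 0] by linarith
  then show ?thesis unfolding wN_eq_on_period wN_on_period_def
    using wbase_le_bound[of N] by (auto intro: add_increasing2 add_increasing)
qed

lemma wN_eq_wbase_below_block:
  assumes "0 \<le> t" "t < 2^(k+1)" "k \<le> N"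
  shows "wN N t = wbase N t"
proof (rule wN_eq_wbase)
  show "t < 2^(N+1)" using assms two_power_mono[of "k+1" "N+1"] by linarith
qed (use assms in simp)

lemma bounded_measurable_set_integrable:
  fixes f :: "real \<Rightarrow> real"
  assumes [measurable]: "f \<in> borel_measurable borel" and bound: "\<And>x. \<bar>f x\<bar> \<le> B"
  shows "set_integrable lborel {a..b} f"
  unfolding set_integrable_def
proof (rule integrableI_bounded_set[where A="{a..b}" and B=B])
  show "AE x in lborel. x \<in> {a..b} \<longrightarrow> norm (indicator {a..b} x *\<^sub>R f x) \<le> B"
    using bound by auto
qed (auto simp: emeasure_lborel_Icc_eq)

lemma wN_set_integrable: "2 \<le> N \<Longrightarrow> set_integrable lborel {a..b} (wN N)"
  by (rule bounded_measurable_set_integrable[where B="2^N + wbase_bound N"])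
    (use wN_bounded wN_nonneg in \<open>auto simp: abs_le_iff intro: order_trans[of _ 0]\<close>)

lemma wN_integrable_on: "2 \<le> N \<Longrightarrow> wN N integrable_on {a..b}"
  using set_borel_integral_eq_integral(1)[OF wN_set_integrable] .

lemma wN_set_lebesgue_integral: "2 \<le> N \<Longrightarrow> (LINT x:{a..b}|lborel. wN N x) = integral {a..b} (wN N)"
  using set_borel_integral_eq_integral(2)[OF wN_set_integrable] .

lemma wbase_integrable_on: "wbase N integrable_on {a..b}"
  by (rule set_borel_integral_eq_integral(1)[OF bounded_measurable_set_integrable[where B="wbase_bound N"]])
    (use wbase_le_bound wbase_nonneg in \<open>auto simp: abs_le_iff intro: order_trans[of _ 0]\<close>)

definition meas_in :: "real set \<Rightarrow> real \<Rightarrow> real \<Rightarrow> real" where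
  "meas_in S a b = measure lebesgue (S \<inter> {a..b})"

lemma Ico_Int_Icc_lmeasurable: "{p..<q::real} \<inter> {a..b} \<in> lmeasurable"
  by (rule bounded_set_imp_lmeasurable) auto

lemma meas_in_nonneg: "0 \<le> meas_in S a b"
  unfolding meas_in_def by simp

lemma meas_in_Ico_le: "meas_in {p..<q} a b \<le> max 0 (min b q - max a p)"
proof (cases "max a p \<le> min b q")
  case True
  have "meas_in {p..<q} a b \<le> measure lebesgue {max a p .. min b q}"
    unfolding meas_in_def by (rule measure_mono_fmeasurable) (auto intro: Ico_Int_Icc_lmeasurable)
  then show ?thesis using True by simp
next
  case False
  then have "{p..<q::real} \<inter> {a..b} = {}" by auto
  then show ?thesis unfolding meas_in_def by simp
qed

lemma meas_in_mono:
  assumes "S \<subseteq> T" "S \<inter> {a..b} \<in> lmeasurable" "T \<inter> {a..b} \<in> lmeasurable"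
  shows "meas_in S a b \<le> meas_in T a b"
  unfolding meas_in_def by (rule measure_mono_fmeasurable) (use assms in \<open>auto dest: fmeasurableD\<close>)

lemma meas_in_Ico_le_length: "p \<le> q \<Longrightarrow> meas_in {p..<q} a b \<le> q - p"
  using meas_in_Ico_le[of p q a b] by simp

lemma meas_in_Ico_le_width: "a \<le> b \<Longrightarrow> meas_in {p..<q} a b \<le> b - a"
  using meas_in_Ico_le[of p q a b] by simp

lemma meas_in_Ico_disjoint: "b \<le> p \<or> q \<le> a \<Longrightarrow> meas_in {p..<q} a b = 0"
  using meas_in_Ico_le[of p q a b] meas_in_nonneg[of "{p..<q}" a b] by auto

lemma indicator_has_integral_meas_in:
  "S \<inter> {a..b} \<in> lmeasurable \<Longrightarrow> (indicator S has_integral meas_in S a b) {a..b}"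
  unfolding meas_in_def
  by (metis has_integral_integral integrable_on_indicator integral_indicator)

lemma Iint_Int_lmeasurable: "Iint k \<inter> {a..b} \<in> lmeasurable"
  unfolding Iint_def by (rule Ico_Int_Icc_lmeasurable)

lemma Lminus_Int_lmeasurable: "Lminus k j \<inter> {a..b} \<in> lmeasurable"
  unfolding Lminus_def by (auto intro: Ico_Int_Icc_lmeasurable)

lemma Lplus_Int_lmeasurable: "Lplus k j \<inter> {a..b} \<in> lmeasurable"
  unfolding Lplus_def by (auto intro: Ico_Int_Icc_lmeasurable)

lemma meas_in_Lminus_le:
  "1 \<le> j \<Longrightarrow> j \<le> k \<Longrightarrow>
    meas_in (Lminus k j) a b \<le> meas_in {2^k + real k ..< 2^k + real k + Ltail k j} a b"
  by (rule meas_in_mono[OF Lminus_subset_left_tail Lminus_Int_lmeasurable Ico_Int_Icc_lmeasurable])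

lemma meas_in_Lplus_le:
  "1 \<le> j \<Longrightarrow> j \<le> k \<Longrightarrow> meas_in (Lplus k j) a b \<le> meas_in {2^(k+1) - Ltail k j ..< 2^(k+1)} a b"
  by (rule meas_in_mono[OF Lplus_subset_right_tail Lplus_Int_lmeasurable Ico_Int_Icc_lmeasurable])

text \<open>An upper bound for \<open>\<integral>\<^sub>a\<^sup>b w\<^sub>k\<close>; it is not an equality only because the pieces
  \<open>(L\<^sub>k\<^sup>-)\<^sup>j\<close> and \<open>(L\<^sub>k\<^sup>+)\<^sup>j\<close> are counted separately.\<close>

definition block_mass :: "nat \<Rightarrow> real \<Rightarrow> real \<Rightarrow> real" where
  "block_mass k a b = 2^(k+1) * meas_in (Iint k) a b
     + (\<Sum>j=1..k. 2^j * (meas_in (Lminus k j) a b + meas_in (Lplus k j) a b))"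

lemma integral_wbase_le_block_masses:
  "integral {a..b} (wbase N) \<le> meas_in {0..<4} a b + (\<Sum>k=2..N. block_mass k a b)"
proof -
  define majorant :: "real \<Rightarrow> real" where
    "majorant x = indicator {0..<4} x + (\<Sum>k=2..N. 2^(k+1) * indicator (Iint k) x
      + (\<Sum>j=1..k. 2^j * (indicator (Lminus k j) x + indicator (Lplus k j) x)))" for x
  have majorant: "(majorant has_integral (meas_in {0..<4} a b + (\<Sum>k=2..N. block_mass k a b))) {a..b}"
    unfolding majorant_def block_mass_def
    by (intro has_integral_add has_integral_sum has_integral_mult_right indicator_has_integral_meas_in
        finite_atLeastAtMost Lminus_Int_lmeasurable Lplus_Int_lmeasurable Iint_Int_lmeasurable
        Ico_Int_Icc_lmeasurable)
  have "wbase N x \<le> majorant x" for x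
    unfolding wbase_def majorant_def wk_def
    by (intro add_mono sum_mono order_refl mult_left_mono) (auto simp: indicator_def)
  then have "integral {a..b} (wbase N) \<le> integral {a..b} majorant"
    by (intro integral_le) (use wbase_integrable_on has_integral_integrable[OF majorant] in auto)
  then show ?thesis using majorant integral_unique by metis
qed

subsection \<open>The weight is large or the point is far away\<close>

lemma mult_le_mult_ge_one:
  fixes c x W :: real
  assumes "1 \<le> W" "0 \<le> c" "0 \<le> x"
  shows "c * x \<le> c * W * x"
  using mult_right_mono[OF mult_left_mono[OF assms(1,2)] assms(3)] by simp

text \<open>Here \<open>v\<close> and \<open>r\<close> are the height and length of a piece, \<open>d\<close> its distance from a
  point \<open>t\<close>, and \<open>W\<close> the weight at \<open>t\<close>.\<close>

lemma heavy_or_far_of_dichotomy: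
  fixes W V v l r d :: real
  assumes W: "1 \<le> W" and v: "v \<le> V" and r: "0 < r" "v * r = 2 * l" and d: "0 \<le> d"
    and dichotomy: "V \<le> W \<or> l \<le> W * (r + d)"
  shows "v \<le> 16 * W \<or> 2 * l \<le> 16 * W * d"
proof (cases "V \<le> W")
  case True
  then show ?thesis using v W by simp
next
  case False
  then have l: "l \<le> W * (r + d)" using dichotomy by simp
  show ?thesis
  proof (cases "d \<le> r")
    case True
    have "l \<le> W * (2 * r)" using l W True by (smt (verit) mult_left_mono)
    then have "v * r \<le> 4 * (W * r)" using r(2) by (simp add: algebra_simps)
    also have "\<dots> \<le> 16 * (W * r)" using W r(1) by simp
    finally have "v * r \<le> (16 * W) * r" by (simp add: algebra_simps)
    then show ?thesis using r(1) by simp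
  next
    case False
    have "l \<le> W * (2 * d)" using l W False by (smt (verit) mult_left_mono)
    also have "\<dots> \<le> 8 * W * d" using W d by simp
    finally show ?thesis by simp
  qed
qed

lemma wN_before_block:
  assumes N: "2 \<le> N" and k: "2 \<le> k" "k \<le> N" and t: "0 \<le> t" "t < 2^k"
  shows "2^(k+1) \<le> 16 * wN N t \<or> 2^(k+1) \<le> 16 * wN N t * (2^k - t)"
proof -
  have W1: "1 \<le> wN N t" by (rule wN_ge_one[OF N])
  consider "k = 2" | "2^k / 8 \<le> 2^k - t" | "3 \<le> k" "2^k - t < 2^k / 8"
    using k by (cases "k = 2") (auto simp: not_le[symmetric])
  then show ?thesis
  proof cases
    case 1
    then show ?thesis using W1 by simp
  next
    case 2
    then have "2^(k+1) \<le> 16 * (2^k - t)" by simp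
    also have "\<dots> \<le> 16 * wN N t * (2^k - t)"
      using mult_le_mult_ge_one[OF W1, of 16 "2^k - t"] t by simp
    finally show ?thesis ..
  next
    case 3
    have k1: "2 \<le> k - 1" "k - 1 \<le> N" and kk: "k - 1 + 1 = k" using k 3 by auto
    have "ctr (k - 1) \<le> t" using ctr_pred[of k] ell_pred_ge[of k] k 3 by simp
    then have "2^(k-1) \<le> wbase N t \<or> ell (k-1) \<le> wbase N t * (2^k - t)"
      using wbase_right_half[OF k1, of t] t kk by simp
    moreover have "wN N t = wbase N t"
      using wN_eq_wbase_below_block[of t "k - 1" N] t kk k1 by simp
    ultimately have "2^(k-1) \<le> wN N t \<or> 2^k / 8 \<le> wN N t * (2^k - t)"
      using ell_pred_ge[of k] k by auto
    moreover have pow: "(2::real)^(k+1) = 4 * 2^(k-1)" "(2::real)^(k+1) = 16 * (2^k / 8)"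
      using kk power_Suc[of "2::real" "k - 1"] by simp_all
    ultimately show ?thesis
    proof (elim disjE)
      assume "2^(k-1) \<le> wN N t"
      then have "2^(k+1) \<le> 16 * wN N t" using pow W1 by linarith
      then show ?thesis ..
    next
      assume "2^k / 8 \<le> wN N t * (2^k - t)"
      then have "2^(k+1) \<le> 16 * (wN N t * (2^k - t))" using pow by linarith
      then show ?thesis by (simp add: mult.assoc)
    qed
  qed
qed

lemma wN_ge_Iint:
  assumes "2 \<le> k" "k \<le> N" "t \<in> Iint k"
  shows "2^(k+1) \<le> wN N t"
proof -
  have "0 \<le> t" "t < 2^(k+1)"
    using assms(3) Iint_subset_block[of k] zero_le_power[of "2::real" k] by auto
  then show ?thesis using wbase_ge_Iint[OF assms] wN_eq_wbase_below_block[of t k N] assms by simp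
qed

lemma wN_before_Lminus:
  assumes N: "2 \<le> N" and k: "2 \<le> k" "k \<le> N" and t: "0 \<le> t" "t < 2^k + real k"
  shows "2^(k+1) \<le> 16 * wN N t \<or> 2^(k+1) \<le> 16 * wN N t * (2^k + real k - t)"
proof (cases "t < 2^k")
  case True
  have "16 * wN N t * (2^k - t) \<le> 16 * wN N t * (2^k + real k - t)"
    using wN_ge_one[OF N, of t] by simp
  then show ?thesis using wN_before_block[OF N k t(1) True] by linarith
next
  case False
  then have "2^(k+1) \<le> wN N t" using wN_ge_Iint[OF k] t unfolding Iint_def by simp
  then show ?thesis using wN_ge_one[OF N, of t] by simp
qed

lemma wN_after_Iint:
  assumes N: "2 \<le> N" and k: "2 \<le> k" "k \<le> N" and t: "2^k + real k \<le> t" "t \<le> 2^(N+1)"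
  shows "2^k \<le> wN N t \<or> ell k \<le> wN N t * (t - (2^k + real k))"
proof (cases "t < ctr k")
  case True
  have "0 \<le> t" using t zero_le_power[of "2::real" k] by linarith
  moreover have "t < 2^(k+1)" using True ctr_add_ell[of k] ell_pos[of k] k by simp
  ultimately have "wN N t = wbase N t" using wN_eq_wbase_below_block k by blast
  then show ?thesis using wbase_left_half[OF k t(1) True] by simp
next
  case False
  then have "ell k \<le> t - (2^k + real k)" unfolding ctr_def by simp
  also have "\<dots> \<le> wN N t * (t - (2^k + real k))"
    using mult_le_mult_ge_one[OF wN_ge_one[OF N], of 1] t by simp
  finally show ?thesis ..
qed

lemma wN_before_block_end:
  assumes N: "2 \<le> N" and k: "2 \<le> k" "k \<le> N" and t: "0 \<le> t" "t < 2^(k+1)"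
  shows "2^k \<le> wN N t \<or> ell k \<le> wN N t * (2^(k+1) - t)"
proof (cases "ctr k \<le> t")
  case True
  then show ?thesis using wbase_right_half[OF k True t(2)] wN_eq_wbase_below_block[OF t k(2)] by simp
next
  case False
  then have "ell k \<le> 2^(k+1) - t" using ctr_add_ell[of k] by simp
  also have "\<dots> \<le> wN N t * (2^(k+1) - t)"
    using mult_le_mult_ge_one[OF wN_ge_one[OF N], of 1] t by simp
  finally show ?thesis ..
qed

lemma wN_after_block:
  assumes N: "2 \<le> N" and k: "2 \<le> k" "k \<le> N" and t: "2^(k+1) \<le> t" "t \<le> 2^(N+1)"
  shows "2^k \<le> wN N t \<or> ell k \<le> wN N t * (t - 2^(k+1))"
proof (cases "k = N")
  case True
  then show ?thesis using t wN_half_period[of N] by simp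
next
  case False
  then have k': "2 \<le> k + 1" "k + 1 \<le> N" using k by auto
  have pow: "(2::real)^k \<le> 2^(k+1)" "(2::real)^(k+1) \<le> 2^(k+2)" by simp_all
  show ?thesis
  proof (cases "t < 2^(k+1) + real (k + 1)")
    case True
    then have "2^(k+2) \<le> wN N t" using wN_ge_Iint[OF k'] t unfolding Iint_def by simp
    then have "2^k \<le> wN N t" using pow by linarith
    then show ?thesis ..
  next
    case False
    then have "2^(k+1) \<le> wN N t \<or> ell (k+1) \<le> wN N t * (t - (2^(k+1) + real (k+1)))"
      using wN_after_Iint[OF N k'] t by simp
    then show ?thesis
    proof (elim disjE)
      assume "2^(k+1) \<le> wN N t"
      then have "2^k \<le> wN N t" using pow by linarith
      then show ?thesis ..
    next
      assume "ell (k+1) \<le> wN N t * (t - (2^(k+1) + real (k+1)))"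
      moreover have "wN N t * (t - (2^(k+1) + real (k+1))) \<le> wN N t * (t - 2^(k+1))"
        using wN_ge_one[OF N, of t] by simp
      ultimately have "ell k \<le> wN N t * (t - 2^(k+1))" using ell_mono[of k] by simp
      then show ?thesis ..
    qed
  qed
qed

lemma heavy_or_far_Iint:
  assumes N: "2 \<le> N" and k: "2 \<le> k" "k \<le> N" and t: "0 \<le> t" "t \<le> 2^(N+1)"
  shows "2^(k+1) \<le> 16 * wN N t \<or> 2^(k+1) \<le> 16 * wN N t * (2^k - t)
    \<or> 2^(k+1) \<le> 16 * wN N t * (t - (2^k + real k))"
proof -
  let ?W = "wN N t" and ?e = "2^k + real k :: real"
  have W1: "1 \<le> ?W" by (rule wN_ge_one[OF N])
  consider "t < 2^k" | "2^k \<le> t" "t < ?e" | "?e \<le> t" by linarith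
  then show ?thesis
  proof cases
    case 1
    then show ?thesis using wN_before_block[OF N k t(1)] by blast
  next
    case 2
    then have "2^(k+1) \<le> ?W" using wN_ge_Iint[OF k] unfolding Iint_def by simp
    then show ?thesis using W1 by simp
  next
    case 3
    have pow: "(2::real)^(k+1) = 2 * 2^k" "2^(k+1) \<le> 8 * ell k" using ell_ge[of k] k by simp_all
    have nonneg: "0 \<le> ?W * (t - ?e)" using 3 W1 by simp
    from wN_after_Iint[OF N k 3 t(2)] show ?thesis
    proof (elim disjE)
      assume "2^k \<le> ?W"
      then have "2^(k+1) \<le> 16 * ?W" using pow W1 by linarith
      then show ?thesis ..
    next
      assume "ell k \<le> ?W * (t - ?e)"
      then have "2^(k+1) \<le> 16 * (?W * (t - ?e))" using pow nonneg by linarith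
      then show ?thesis by (auto simp: mult.assoc)
    qed
  qed
qed

lemma heavy_or_far_left_tail:
  assumes N: "2 \<le> N" and k: "2 \<le> k" "k \<le> N" and j: "1 \<le> j" "j \<le> k"
    and t: "0 \<le> t" "t \<le> 2^(N+1)"
  shows "2^j \<le> 16 * wN N t \<or> 2 * ell k \<le> 16 * wN N t * (2^k + real k - t)
    \<or> 2 * ell k \<le> 16 * wN N t * (t - (2^k + real k + Ltail k j))"
proof -
  let ?W = "wN N t" and ?e = "2^k + real k :: real"
  have W1: "1 \<le> ?W" by (rule wN_ge_one[OF N])
  have pow: "(2::real)^j \<le> 2^k" "(2::real)^k \<le> 2^(k+1)" "2 * ell k \<le> 2^k"
    using two_power_mono[OF j(2)] ell_le[of k] by simp_all
  consider "t < ?e" | "?e \<le> t" "t < ?e + Ltail k j" | "?e + Ltail k j \<le> t" by linarith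
  then show ?thesis
  proof cases
    case 1
    with wN_before_Lminus[OF N k t(1)] pow show ?thesis by linarith
  next
    case 2
    then have "2^j \<le> wbase N t" using wbase_ge_left_tail[OF k j] by simp
    moreover have "t < 2^(k+1)" using 2 Ltail_le_ell[of k j] ctr_add_ell[of k] unfolding ctr_def by simp
    then have "?W = wbase N t" using wN_eq_wbase_below_block[of t k N] t k by simp
    ultimately show ?thesis using W1 by simp
  next
    case 3
    have d: "Ltail k j + (t - (?e + Ltail k j)) = t - ?e" by simp
    have disj: "2^k \<le> ?W \<or> ell k \<le> ?W * (Ltail k j + (t - (?e + Ltail k j)))"
      unfolding d by (rule wN_after_Iint[OF N k _ t(2)]) (use 3 Ltail_pos[of k j] k in simp)
    have "0 \<le> t - (?e + Ltail k j)" using 3 by simp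
    moreover have "0 < Ltail k j" using Ltail_pos k by simp
    ultimately show ?thesis
      using heavy_or_far_of_dichotomy[OF W1 pow(1) _ two_power_mult_Ltail[OF j(1)] _ disj] by blast
  qed
qed

lemma heavy_or_far_right_tail:
  assumes N: "2 \<le> N" and k: "2 \<le> k" "k \<le> N" and j: "1 \<le> j" "j \<le> k"
    and t: "0 \<le> t" "t \<le> 2^(N+1)"
  shows "2^j \<le> 16 * wN N t \<or> 2 * ell k \<le> 16 * wN N t * (2^(k+1) - Ltail k j - t)
    \<or> 2 * ell k \<le> 16 * wN N t * (t - 2^(k+1))"
proof -
  let ?W = "wN N t" and ?p = "2^(k+1) - Ltail k j :: real"
  have W1: "1 \<le> ?W" by (rule wN_ge_one[OF N])
  have r: "0 < Ltail k j" using Ltail_pos k by simp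
  note dichotomy = heavy_or_far_of_dichotomy[OF W1 two_power_mono[OF j(2)] r two_power_mult_Ltail[OF j(1)]]
  consider "t < ?p" | "?p \<le> t" "t < 2^(k+1)" | "2^(k+1) \<le> t" by linarith
  then show ?thesis
  proof cases
    case 1
    have d: "Ltail k j + (?p - t) = 2^(k+1) - t" by simp
    have disj: "2^k \<le> ?W \<or> ell k \<le> ?W * (Ltail k j + (?p - t))"
      unfolding d by (rule wN_before_block_end[OF N k t(1)]) (use 1 r in simp)
    have "0 \<le> ?p - t" using 1 by simp
    from dichotomy[OF this disj] show ?thesis by blast
  next
    case 2
    then have "2^j \<le> wbase N t" using wbase_ge_right_tail[OF k j] by simp
    then show ?thesis using wN_eq_wbase_below_block[of t k N] t k 2 W1 by simp
  next
    case 3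
    have "?W * (t - 2^(k+1)) \<le> ?W * (Ltail k j + (t - 2^(k+1)))" using W1 r by simp
    then have disj: "2^k \<le> ?W \<or> ell k \<le> ?W * (Ltail k j + (t - 2^(k+1)))"
      using wN_after_block[OF N k 3 t(2)] by (elim disjE) auto
    have "0 \<le> t - 2^(k+1)" using 3 by simp
    from dichotomy[OF this disj] show ?thesis by blast
  qed
qed

lemma weighted_Ico_bound:
  fixes a b t v W p q l \<rho> :: real
  assumes t: "a \<le> t" "t \<le> b" and v: "0 \<le> v" and W: "0 \<le> W"
    and len: "q - p \<le> \<rho> * l" and \<rho>: "1 \<le> \<rho>"
    and heavy_or_far: "v \<le> W \<or> v * l \<le> W * (p - t) \<or> v * l \<le> W * (t - q)"
  shows "v * meas_in {p..<q} a b \<le> \<rho> * W * (b - a)"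
proof (cases "meas_in {p..<q} a b = 0")
  case True
  then show ?thesis using W \<rho> t by simp
next
  case False
  then have m: "meas_in {p..<q} a b \<le> q - p" "meas_in {p..<q} a b \<le> b - a" "p < b" "a < q"
    using meas_in_Ico_le[of p q a b] meas_in_nonneg[of "{p..<q}" a b]
    by (auto simp: max_def min_def split: if_splits)
  have "v * meas_in {p..<q} a b \<le> \<rho> * (v * l)" if "v * l \<le> W * (b - a)"
  proof -
    have "v * meas_in {p..<q} a b \<le> v * (\<rho> * l)" using m(1) len v by (intro mult_left_mono) auto
    then show ?thesis by (simp add: algebra_simps)
  qed
  moreover have "\<rho> * (v * l) \<le> \<rho> * W * (b - a)" if "v * l \<le> W * (b - a)"
    using mult_left_mono[OF that] \<rho> by (simp add: mult.assoc)
  moreover have "v * l \<le> W * (b - a)" if "v * l \<le> W * (p - t) \<or> v * l \<le> W * (t - q)"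
    using that m t W by (smt (verit) mult_left_mono)
  moreover have "v * meas_in {p..<q} a b \<le> \<rho> * W * (b - a)" if "v \<le> W"
  proof -
    have "v * meas_in {p..<q} a b \<le> W * (b - a)"
      using mult_mono[OF that m(2) W meas_in_nonneg] .
    also have "\<dots> \<le> \<rho> * W * (b - a)"
      using mult_le_mult_ge_one[OF \<rho> W, of "b - a"] t by (simp add: mult.commute)
    finally show ?thesis .
  qed
  ultimately show ?thesis using heavy_or_far by fastforce
qed

lemma Iint_mass_le:
  assumes N: "2 \<le> N" and k: "2 \<le> k" "k \<le> N"
    and t: "a \<le> t" "t \<le> b" "0 \<le> t" "t \<le> 2^(N+1)"
  shows "2^(k+1) * meas_in (Iint k) a b \<le> 16 * real k * wN N t * (b - a)"
proof -
  have "2^(k+1) * meas_in (Iint k) a b \<le> real k * (16 * wN N t) * (b - a)"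
    unfolding Iint_def
    by (rule weighted_Ico_bound[OF t(1,2), where l=1])
      (use heavy_or_far_Iint[OF N k t(3,4)] wN_nonneg[OF N] k in auto)
  then show ?thesis by (simp add: mult.assoc)
qed

lemma Lminus_mass_le:
  assumes N: "2 \<le> N" and k: "2 \<le> k" "k \<le> N" and j: "1 \<le> j" "j \<le> k"
    and t: "a \<le> t" "t \<le> b" "0 \<le> t" "t \<le> 2^(N+1)"
  shows "2^j * meas_in (Lminus k j) a b \<le> 16 * wN N t * (b - a)"
proof -
  let ?e = "2^k + real k :: real"
  have "2^j * meas_in (Lminus k j) a b \<le> 2^j * meas_in {?e..<?e + Ltail k j} a b"
    using meas_in_Lminus_le[OF j] by simp
  also have "\<dots> \<le> 1 * (16 * wN N t) * (b - a)"
    by (rule weighted_Ico_bound[OF t(1,2), where l="Ltail k j"])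
      (use heavy_or_far_left_tail[OF N k j t(3,4)] two_power_mult_Ltail[OF j(1)] wN_nonneg[OF N]
        in \<open>auto simp: mult.assoc\<close>)
  finally show ?thesis by simp
qed

lemma Lplus_mass_le:
  assumes N: "2 \<le> N" and k: "2 \<le> k" "k \<le> N" and j: "1 \<le> j" "j \<le> k"
    and t: "a \<le> t" "t \<le> b" "0 \<le> t" "t \<le> 2^(N+1)"
  shows "2^j * meas_in (Lplus k j) a b \<le> 16 * wN N t * (b - a)"
proof -
  let ?p = "2^(k+1) - Ltail k j :: real"
  have "2^j * meas_in (Lplus k j) a b \<le> 2^j * meas_in {?p..<2^(k+1)} a b"
    using meas_in_Lplus_le[OF j] by simp
  also have "\<dots> \<le> 1 * (16 * wN N t) * (b - a)"
    by (rule weighted_Ico_bound[OF t(1,2), where l="Ltail k j"])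
      (use heavy_or_far_right_tail[OF N k j t(3,4)] two_power_mult_Ltail[OF j(1)] wN_nonneg[OF N]
        in \<open>auto simp: mult.assoc\<close>)
  finally show ?thesis by simp
qed

lemma block_mass_le_local:
  assumes N: "2 \<le> N" and k: "2 \<le> k" "k \<le> N"
    and t: "a \<le> t" "t \<le> b" "0 \<le> t" "t \<le> 2^(N+1)"
  shows "block_mass k a b \<le> 48 * real k * wN N t * (b - a)"
proof -
  let ?X = "wN N t * (b - a)"
  have "(\<Sum>j=1..k. 2^j * (meas_in (Lminus k j) a b + meas_in (Lplus k j) a b)) \<le> (\<Sum>j=1..k. 32 * ?X)"
  proof (rule sum_mono)
    fix j assume "j \<in> {1..k}"
    then have j: "1 \<le> j" "j \<le> k" by auto
    show "2^j * (meas_in (Lminus k j) a b + meas_in (Lplus k j) a b) \<le> 32 * ?X"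
      using Lminus_mass_le[OF N k j t] Lplus_mass_le[OF N k j t] by (simp add: algebra_simps)
  qed
  then show ?thesis
    using Iint_mass_le[OF N k t] unfolding block_mass_def by (simp add: algebra_simps)
qed

lemma block_mass_le:
  assumes k: "2 \<le> k"
  shows "block_mass k a b \<le> 4 * real k * 2^k"
proof -
  have L: "(\<Sum>j=1..k. 2^j * (meas_in (Lminus k j) a b + meas_in (Lplus k j) a b)) \<le> (\<Sum>j=1..k. 2 * 2^k)"
  proof (rule sum_mono)
    fix j assume "j \<in> {1..k}"
    then have j: "1 \<le> j" "j \<le> k" by auto
    have "meas_in (Lminus k j) a b \<le> Ltail k j" "meas_in (Lplus k j) a b \<le> Ltail k j"
      using meas_in_Lminus_le[OF j, of a b] meas_in_Lplus_le[OF j, of a b] Ltail_pos[of k j] k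
        meas_in_Ico_le_length[of "2^k + real k" "2^k + real k + Ltail k j" a b]
        meas_in_Ico_le_length[of "2^(k+1) - Ltail k j" "2^(k+1)" a b]
      by simp_all
    then have "2^j * (meas_in (Lminus k j) a b + meas_in (Lplus k j) a b) \<le> 2^j * (2 * Ltail k j)"
      by (intro mult_left_mono) auto
    also have "\<dots> = 4 * ell k" using two_power_mult_Ltail[OF j(1), of k] by (simp add: algebra_simps)
    finally show "2^j * (meas_in (Lminus k j) a b + meas_in (Lplus k j) a b) \<le> 2 * 2^k"
      using ell_le[of k] by simp
  qed
  have "meas_in (Iint k) a b \<le> real k"
    using meas_in_Ico_le_length[of "2^k" "2^k + real k" a b] unfolding Iint_def by simp
  then have "2^(k+1) * meas_in (Iint k) a b \<le> 2^(k+1) * real k" by (intro mult_left_mono) auto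
  moreover have "(\<Sum>j=1..k. 2 * (2::real)^k) = 2 * real k * 2^k" "(2::real)^(k+1) * real k = 2 * real k * 2^k"
    by simp_all
  ultimately show ?thesis using L unfolding block_mass_def by linarith
qed

lemma meas_in_eq_0_outside:
  assumes "S \<subseteq> {p..<q}" "S \<inter> {a..b} \<in> lmeasurable" "b \<le> p \<or> q \<le> a"
  shows "meas_in S a b = 0"
  using meas_in_mono[OF assms(1,2) Ico_Int_Icc_lmeasurable] meas_in_Ico_disjoint[OF assms(3)]
    meas_in_nonneg[of S a b] by simp

lemma block_mass_eq_0:
  assumes k: "2 \<le> k" and ab: "b \<le> 2^k \<or> 2^(k+1) \<le> a"
  shows "block_mass k a b = 0"
  unfolding block_mass_def
  using meas_in_eq_0_outside[OF Iint_subset_block Iint_Int_lmeasurable ab]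
    meas_in_eq_0_outside[OF L_subset_block(1)[OF k] Lminus_Int_lmeasurable ab]
    meas_in_eq_0_outside[OF L_subset_block(2)[OF k] Lplus_Int_lmeasurable ab]
  by simp

lemma sum_two_power_le: "(\<Sum>k=2..K. (2::real)^k) \<le> 2^(K+1)"
  by (induction K) (simp_all add: atLeastAtMostSuc_conv)

lemma exists_dyadic_block_upper:
  fixes b :: real
  assumes "2 \<le> n" "4 < b" "b \<le> 2^(n+1)"
  shows "\<exists>K. 2 \<le> K \<and> K \<le> n \<and> 2^K < b \<and> b \<le> 2^(K+1)"
  using assms(1,3)
proof (induction n rule: dec_induct)
  case base
  then show ?case using assms(2) by (intro exI[of _ 2]) auto
next
  case (step n)
  then show ?case by (cases "b \<le> 2^(n+1)") (force, auto intro!: exI[of _ "Suc n"])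
qed

lemma block_mass_eq_0_away:
  assumes k: "2 \<le> k" "k \<notin> {K - 1, K}" and K: "2^K < b" "b \<le> 2^(K+1)" "2^K / 2 \<le> a"
  shows "block_mass k a b = 0"
proof -
  have "K + 1 \<le> k \<or> k + 2 \<le> K" using k by auto
  then show ?thesis
  proof
    assume "K + 1 \<le> k"
    then show ?thesis using block_mass_eq_0[OF k(1)] two_power_mono[of "K + 1" k] K by auto
  next
    assume "k + 2 \<le> K"
    then have "(2::real)^(k+2) \<le> 2^K" by (rule two_power_mono)
    then show ?thesis using block_mass_eq_0[OF k(1)] K by auto
  qed
qed

lemma sum_block_mass_le_near:
  assumes N: "2 \<le> N" and K: "2^K < b" "b \<le> 2^(K+1)" "2^K / 2 \<le> a"
    and t: "a \<le> t" "t \<le> b" "b \<le> 2^(N+1)"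
  shows "(\<Sum>k=2..N. block_mass k a b) \<le> 96 * real N * wN N t * (b - a)"
proof -
  let ?B = "48 * real N * wN N t * (b - a)"
  have t': "0 \<le> t" "t \<le> 2^(N+1)" using t K by (auto intro: order_trans[of _ "2^K/2"])
  have B: "0 \<le> ?B" using wN_nonneg[OF N, of t] t by simp
  have local: "block_mass k a b \<le> ?B" if "k \<in> {2..N}" for k
  proof -
    have "block_mass k a b \<le> 48 * real k * wN N t * (b - a)"
      using block_mass_le_local[OF N _ _ t(1,2) t'] that by simp
    also have "\<dots> \<le> ?B" using that wN_nonneg[OF N, of t] t
      by (intro mult_right_mono mult_left_mono) auto
    finally show ?thesis .
  qed
  have "(\<Sum>k=2..N. block_mass k a b) = (\<Sum>k\<in>{2..N} \<inter> {K - 1, K}. block_mass k a b)"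
    by (rule sum.mono_neutral_right) (use block_mass_eq_0_away[OF _ _ K] in auto)
  also have "\<dots> \<le> card ({2..N} \<inter> {K - 1, K}) * ?B"
    by (rule sum_bounded_above) (use local in auto)
  also have "\<dots> \<le> 2 * ?B"
  proof -
    have "card ({2..N} \<inter> {K - 1, K}) \<le> card {K - 1, K}" by (rule card_mono) auto
    also have "\<dots> \<le> 2" by (simp add: card_insert_if)
    finally show ?thesis using B by (intro mult_right_mono) auto
  qed
  finally show ?thesis by simp
qed

text \<open>When \<open>a\<close> is small compared to \<open>b\<close>, the length \<open>b - a\<close> is comparable to \<open>b\<close>, and the
  total mass below \<open>b\<close> suffices.\<close>

lemma sum_block_mass_le_far:
  assumes N: "2 \<le> N" and K: "2 \<le> K" "K \<le> N" "2^K < b" "b \<le> 2^(K+1)" "a < 2^K / 2"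
    and W: "1 \<le> W" and ab: "a \<le> b"
  shows "(\<Sum>k=2..N. block_mass k a b) \<le> 16 * real N * W * (b - a)"
proof -
  have "(\<Sum>k=2..N. block_mass k a b) \<le> (\<Sum>k=2..N. if k \<le> K then 4 * real N * 2^k else 0)"
  proof (rule sum_mono)
    fix k assume k: "k \<in> {2..N}"
    show "block_mass k a b \<le> (if k \<le> K then 4 * real N * 2^k else 0)"
    proof (cases "k \<le> K")
      case True
      have "4 * real k * 2^k \<le> 4 * real N * (2::real)^k"
        using k by (intro mult_right_mono mult_left_mono) auto
      with block_mass_le[of k a b] k have "block_mass k a b \<le> 4 * real N * 2^k"
        by (auto intro: order_trans)
      then show ?thesis using True by simp
    next
      case False
      then have "(2::real)^(K+1) \<le> 2^k" by (intro two_power_mono) simp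
      then show ?thesis using block_mass_eq_0[of k] K False k by auto
    qed
  qed
  also have "\<dots> = 4 * real N * (\<Sum>k=2..K. 2^k)"
  proof -
    have "{2..N} \<inter> {k. k \<le> K} = {2..K}" using K by auto
    then show ?thesis by (simp add: sum.If_cases sum_distrib_left)
  qed
  also have "\<dots> \<le> 4 * real N * 2^(K+1)" using sum_two_power_le[of K] by (intro mult_left_mono) auto
  also have "\<dots> \<le> 16 * real N * (b - a)" using K by simp
  also have "\<dots> \<le> 16 * real N * W * (b - a)" using mult_le_mult_ge_one[OF W, of "16 * real N"] ab by simp
  finally show ?thesis .
qed

lemma sum_block_mass_le:
  assumes N: "2 \<le> N" and t: "0 \<le> a" "a \<le> t" "t \<le> b" "b \<le> 2^(N+1)"
  shows "(\<Sum>k=2..N. block_mass k a b) \<le> 96 * real N * wN N t * (b - a)"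
proof (cases "b \<le> 4")
  case True
  have "block_mass k a b = 0" if "k \<in> {2..N}" for k
    using block_mass_eq_0[of k] two_power_mono[of 2 k] that True by auto
  then show ?thesis using wN_nonneg[OF N, of t] t by simp
next
  case False
  then obtain K where K: "2 \<le> K" "K \<le> N" "2^K < b" "b \<le> 2^(K+1)"
    using exists_dyadic_block_upper[OF N _ t(4)] by auto
  show ?thesis
  proof (cases "2^K / 2 \<le> a")
    case True
    show ?thesis by (rule sum_block_mass_le_near[OF N K(3,4) True t(2-4)])
  next
    case False
    then have "(\<Sum>k=2..N. block_mass k a b) \<le> 16 * real N * wN N t * (b - a)"
      using sum_block_mass_le_far[OF N K _ wN_ge_one[OF N]] t by simp
    moreover have "0 \<le> real N * wN N t * (b - a)" using wN_nonneg[OF N, of t] t by simp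
    ultimately show ?thesis by linarith
  qed
qed

lemma integral_wN_le_on_half_period:
  assumes N: "2 \<le> N" and t: "0 \<le> a" "a \<le> t" "t \<le> b" "b \<le> 2^(N+1)"
  shows "integral {a..b} (wN N) \<le> 100 * real N * wN N t * (b - a)"
proof -
  have W1: "1 \<le> wN N t" by (rule wN_ge_one[OF N])
  have "integral {a..b} (wN N) = integral {a..b} (wbase N)"
    by (rule integral_spike[of "{2^(N+1)}"]) (use wN_eq_wbase[of _ N] t in auto)
  also have "\<dots> \<le> meas_in {0..<4} a b + (\<Sum>k=2..N. block_mass k a b)"
    by (rule integral_wbase_le_block_masses)
  also have "\<dots> \<le> wN N t * (b - a) + 96 * real N * wN N t * (b - a)"
    using meas_in_Ico_le_width[of a b 0 4] mult_le_mult_ge_one[OF W1, of 1 "b - a"]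
      sum_block_mass_le[OF N t] t by simp
  also have "\<dots> \<le> 100 * real N * wN N t * (b - a)"
  proof -
    have "0 \<le> wN N t * (b - a)" using W1 t by simp
    moreover from this have "1 * (wN N t * (b - a)) \<le> real N * (wN N t * (b - a))"
      using N by (intro mult_right_mono) auto
    ultimately show ?thesis unfolding mult.assoc by linarith
  qed
  finally show ?thesis .
qed

subsection \<open>Averages over arbitrary intervals\<close>

lemma integral_wN_shift:
  "integral {c..d} (wN N) = integral {c - of_int q * 2^(N+2) .. d - of_int q * 2^(N+2)} (wN N)"
proof -
  let ?s = "of_int q * (2::real)^(N+2)"
  have "integral {c - ?s..d - ?s} (\<lambda>x. wN N (x + ?s)) = integral {c..d} (wN N)"
    by (rule integral_shift_real_ivl)
  then show ?thesis using wN_periodic by simp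
qed

lemma integral_wN_reflect:
  "integral {c..d} (wN N) = integral {of_int q * 2^(N+2) - d .. of_int q * 2^(N+2) - c} (wN N)"
proof -
  let ?s = "of_int q * (2::real)^(N+2)"
  have "integral {-d - (-?s) .. -c - (-?s)} (\<lambda>x. wN N (-(x + (-?s)))) = integral {-d .. -c} (\<lambda>x. wN N (-x))"
    by (rule integral_shift_real_ivl)
  moreover have "(\<lambda>x. wN N (-(x + (-?s)))) = wN N" using wN_reflect[of N q] by simp
  ultimately show ?thesis by simp
qed

text \<open>On each half period \<open>[m 2^(N+1), (m+1) 2^(N+1)]\<close> the weight is a translate or a
  reflection of the weight on \<open>[0, 2^(N+1)]\<close>.\<close>

lemma integral_wN_le_on_segment:
  fixes m :: int
  assumes N: "2 \<le> N"
    and ab: "of_int m * 2^(N+1) \<le> a" "a \<le> t" "t \<le> b" "b \<le> (of_int m + 1) * 2^(N+1)"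
  shows "integral {a..b} (wN N) \<le> 100 * real N * wN N t * (b - a)"
proof (cases "even m")
  case True
  then obtain q where m: "m = 2 * q" by blast
  let ?s = "of_int q * (2::real)^(N+2)"
  have "integral {a..b} (wN N) = integral {a - ?s..b - ?s} (wN N)" by (rule integral_wN_shift)
  also have "\<dots> \<le> 100 * real N * wN N (t - ?s) * ((b - ?s) - (a - ?s))"
    by (rule integral_wN_le_on_half_period[OF N]) (use ab in \<open>auto simp: m algebra_simps\<close>)
  finally show ?thesis using wN_periodic[of N "t - ?s" q] by simp
next
  case False
  then obtain q where m: "m = 2 * q + 1" by (metis oddE)
  let ?s = "of_int (q + 1) * (2::real)^(N+2)"
  have "integral {a..b} (wN N) = integral {?s - b..?s - a} (wN N)" by (rule integral_wN_reflect)
  also have "\<dots> \<le> 100 * real N * wN N (?s - t) * ((?s - a) - (?s - b))"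
    by (rule integral_wN_le_on_half_period[OF N]) (use ab in \<open>auto simp: m algebra_simps\<close>)
  finally show ?thesis using wN_reflect[of N "q + 1" t] by simp
qed

lemma integral_wN_segment_le:
  fixes m :: int
  assumes N: "2 \<le> N" and ab: "of_int m * 2^(N+1) \<le> a" "a \<le> b" "b \<le> (of_int m + 1) * 2^(N+1)"
  shows "integral {a..b} (wN N) \<le> 100 * real N * 2^(N+1)"
proof -
  let ?A = "of_int m * (2::real)^(N+1)" and ?B = "(of_int m + 1) * (2::real)^(N+1)"
  have "\<exists>t\<in>{?A, ?B}. wN N t = 1"
  proof (cases "even m")
    case True
    then obtain q where "m = 2 * q" by blast
    then show ?thesis using wN_period_multiple[of N q] by (auto simp: algebra_simps)
  next
    case False
    then obtain q where "m = 2 * q + 1" by (metis oddE)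
    then show ?thesis using wN_period_multiple[of N "q + 1"] by (auto simp: algebra_simps)
  qed
  then obtain t where t: "t \<in> {?A, ?B}" "wN N t = 1" by blast
  have "integral {a..b} (wN N) \<le> integral {?A..?B} (wN N)"
    by (rule integral_subset_le) (use ab wN_integrable_on[OF N] wN_nonneg[OF N] in auto)
  also have "\<dots> \<le> 100 * real N * wN N t * (?B - ?A)"
    by (rule integral_wN_le_on_segment[OF N]) (use t in auto)
  finally show ?thesis using t by (simp add: algebra_simps)
qed

text \<open>The weight is symmetric about every multiple \<open>f\<close> of \<open>2^(N+1)\<close>, so the shorter part
  of an interval straddling \<open>f\<close> reflects into the longer one.\<close>

lemma integral_wN_le_straddling:
  fixes m :: int
  assumes N: "2 \<le> N" and f: "f = of_int m * 2^(N+1)"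
    and ab: "f - 2^(N+1) \<le> a" "a \<le> f" "f \<le> b" "b - f \<le> f - a" and t: "a \<le> t" "t \<le> b"
  shows "integral {a..b} (wN N) \<le> 200 * real N * wN N t * (b - a)"
proof -
  have P: "2 * f = of_int m * 2^(N+2)" unfolding f by simp
  have symm: "wN N (2 * f - x) = wN N x" for x unfolding P by (rule wN_reflect)
  have "integral {f..b} (wN N) = integral {2 * f - b..2 * f - f} (wN N)"
    unfolding P by (rule integral_wN_reflect)
  also have "\<dots> = integral {2 * f - b..f} (wN N)" by simp
  also have "\<dots> \<le> integral {a..f} (wN N)"
    by (rule integral_subset_le) (use ab wN_integrable_on[OF N] wN_nonneg[OF N] in auto)
  finally have right: "integral {f..b} (wN N) \<le> integral {a..f} (wN N)" .
  define t' where "t' = (if t \<le> f then t else 2 * f - t)"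
  have t': "a \<le> t'" "t' \<le> f" "wN N t' = wN N t" using ab t symm unfolding t'_def by auto
  have "integral {a..f} (wN N) \<le> 100 * real N * wN N t' * (f - a)"
    by (rule integral_wN_le_on_segment[OF N, of "m - 1"]) (use ab t' f in \<open>auto simp: algebra_simps\<close>)
  also have "\<dots> \<le> 100 * real N * wN N t * (b - a)"
    unfolding t'(3) using wN_nonneg[OF N, of t] ab by (intro mult_left_mono) auto
  finally have left: "integral {a..f} (wN N) \<le> 100 * real N * wN N t * (b - a)" .
  have "integral {a..b} (wN N) = integral {a..f} (wN N) + integral {f..b} (wN N)"
    using Henstock_Kurzweil_Integration.integral_combine[of a f b "wN N"] ab wN_integrable_on[OF N]
    by simp
  then show ?thesis using left right by linarith
qed

lemma integral_wN_le_short: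
  assumes N: "2 \<le> N" and t: "a \<le> t" "t \<le> b" and short: "b - a \<le> 2^(N+1)"
  shows "integral {a..b} (wN N) \<le> 200 * real N * wN N t * (b - a)"
proof -
  let ?H = "(2::real)^(N+1)"
  define m where "m = \<lfloor>a / ?H\<rfloor>"
  define f where "f = of_int (m + 1) * ?H"
  have m: "of_int m * ?H \<le> a" "a < f"
    using floor_divide_lower[of ?H a] floor_divide_upper[of ?H a] unfolding m_def f_def by simp_all
  have W: "0 \<le> real N * wN N t * (b - a)" using wN_nonneg[OF N, of t] t by simp
  consider "b \<le> f" | "f \<le> b" "b - f \<le> f - a" | "f \<le> b" "f - a \<le> b - f" by linarith
  then show ?thesis
  proof cases
    case 1
    then have "integral {a..b} (wN N) \<le> 100 * real N * wN N t * (b - a)"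
      using integral_wN_le_on_segment[OF N, of m a t b] m t unfolding f_def by simp
    then show ?thesis using W by linarith
  next
    case 2
    then show ?thesis
      by (intro integral_wN_le_straddling[OF N f_def]) (use m t in \<open>auto simp: f_def algebra_simps\<close>)
  next
    case 3
    have P: "2 * f = of_int (m + 1) * 2^(N+2)" unfolding f_def by simp
    have "integral {a..b} (wN N) = integral {2 * f - b..2 * f - a} (wN N)"
      unfolding P by (rule integral_wN_reflect)
    also have "\<dots> \<le> 200 * real N * wN N (2 * f - t) * ((2 * f - a) - (2 * f - b))"
      by (intro integral_wN_le_straddling[OF N f_def])
        (use 3 m t short in \<open>auto simp: f_def algebra_simps\<close>)
    also have "wN N (2 * f - t) = wN N t" unfolding P by (rule wN_reflect)
    finally show ?thesis by simp
  qed
qed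

lemma integral_wN_segments_le:
  fixes m :: int
  assumes N: "2 \<le> N"
  shows "integral {of_int m * 2^(N+1) .. (of_int m + real n) * 2^(N+1)} (wN N)
    \<le> 100 * real N * 2^(N+1) * real n"
proof (induction n)
  case (Suc n)
  let ?H = "(2::real)^(N+1)"
  let ?a = "of_int m * ?H" and ?c = "(of_int m + real n) * ?H" and ?b = "(of_int m + real (Suc n)) * ?H"
  have "integral {?a..?b} (wN N) = integral {?a..?c} (wN N) + integral {?c..?b} (wN N)"
    using Henstock_Kurzweil_Integration.integral_combine[of ?a ?c ?b "wN N"] wN_integrable_on[OF N]
    by (simp add: algebra_simps)
  moreover have "integral {?c..?b} (wN N) \<le> 100 * real N * ?H"
    using integral_wN_segment_le[OF N, of "m + int n" ?c ?b] by (simp add: algebra_simps)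
  ultimately show ?case using Suc.IH by (simp add: algebra_simps)
qed simp

lemma integral_wN_le_long:
  assumes N: "2 \<le> N" and long: "2^(N+1) < b - a"
  shows "integral {a..b} (wN N) \<le> 300 * real N * (b - a)"
proof -
  let ?H = "(2::real)^(N+1)"
  define m where "m = \<lfloor>a / ?H\<rfloor>"
  define c where "c = \<lceil>(b - a) / ?H\<rceil>"
  define n where "n = nat c + 1"
  have "1 < (b - a) / ?H" using long by simp
  then have c: "1 \<le> c" "(b - a) / ?H \<le> of_int c" "of_int c < (b - a) / ?H + 1"
    unfolding c_def by linarith+
  then have n: "real n = of_int c + 1" unfolding n_def by simp
  have "of_int m * ?H \<le> a" "a < (of_int m + 1) * ?H"
    using floor_divide_lower[of ?H a] floor_divide_upper[of ?H a] unfolding m_def by simp_all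
  moreover have "b - a \<le> of_int c * ?H" using c(2) by (simp add: divide_le_eq)
  ultimately have sub: "of_int m * ?H \<le> a" "b \<le> (of_int m + real n) * ?H"
    unfolding n by (simp_all add: algebra_simps)
  have "integral {a..b} (wN N) \<le> integral {of_int m * ?H .. (of_int m + real n) * ?H} (wN N)"
    by (rule integral_subset_le) (use sub long wN_integrable_on[OF N] wN_nonneg[OF N] in auto)
  also have "\<dots> \<le> 100 * real N * (real n * ?H)"
    using integral_wN_segments_le[OF N, of m n] by (simp add: algebra_simps)
  also have "\<dots> \<le> 100 * real N * (3 * (b - a))"
    using c(3) long unfolding n by (intro mult_left_mono) (simp_all add: field_simps)
  finally show ?thesis by (simp add: algebra_simps)
qed

lemma integral_wN_le_average:
  assumes N: "2 \<le> N" and t: "a \<le> t" "t \<le> b"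
  shows "integral {a..b} (wN N) \<le> 300 * real N * wN N t * (b - a)"
proof (cases "b - a \<le> 2^(N+1)")
  case True
  then show ?thesis
    using integral_wN_le_short[OF N t True] wN_nonneg[OF N, of t] t
    by (smt (verit) mult_nonneg_nonneg mult_right_mono of_nat_0_le_iff)
next
  case False
  then have "integral {a..b} (wN N) \<le> 300 * real N * (b - a)" by (intro integral_wN_le_long[OF N]) simp
  also have "\<dots> \<le> 300 * real N * wN N t * (b - a)"
    using mult_le_mult_ge_one[OF wN_ge_one[OF N], of "300 * real N" "b - a"] t by simp
  finally show ?thesis .
qed

subsection \<open>The \<open>A\<^sub>1\<close> constant\<close>

lemma AE_Ico_imp_ex:
  fixes p q :: real
  assumes "AE x in lborel. x \<in> {p..<q} \<longrightarrow> P x" "p < q"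
  shows "\<exists>x\<in>{p..<q}. P x"
proof (rule ccontr)
  assume "\<not> (\<exists>x\<in>{p..<q}. P x)"
  then have "AE x in lborel. x \<notin> {p..<q}" using assms(1) by (auto elim: eventually_mono)
  then have "{p..<q} \<in> null_sets lborel" by (subst AE_iff_null_sets) auto
  then show False using assms(2) by auto
qed

lemma essinf_on_ge:
  fixes w :: "real \<Rightarrow> real"
  assumes ab: "a < b" and lower: "\<And>x. x \<in> {a..b} \<Longrightarrow> m \<le> w x" and upper: "\<And>x. w x \<le> B"
  shows "m \<le> essinf_on a b w"
  unfolding essinf_on_def
proof (rule cSup_upper)
  show "m \<in> {z. AE x in lborel. x \<in> {a..b} \<longrightarrow> z \<le> w x}" using lower by auto
  show "bdd_above {z. AE x in lborel. x \<in> {a..b} \<longrightarrow> z \<le> w x}"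
  proof (rule bdd_aboveI)
    fix z assume "z \<in> {z. AE x in lborel. x \<in> {a..b} \<longrightarrow> z \<le> w x}"
    then have "AE x in lborel. x \<in> {a..<b} \<longrightarrow> z \<le> w x" by (auto elim: eventually_mono)
    then show "z \<le> B" using AE_Ico_imp_ex[OF _ ab] upper by (fastforce intro: order_trans)
  qed
qed

lemma essinf_on_le:
  fixes w :: "real \<Rightarrow> real"
  assumes pq: "p < q" "{p..<q} \<subseteq> {a..b}" and upper: "\<And>x. x \<in> {p..<q} \<Longrightarrow> w x \<le> M"
    and lower: "\<And>x. x \<in> {a..b} \<Longrightarrow> m \<le> w x"
  shows "essinf_on a b w \<le> M"
  unfolding essinf_on_def
proof (rule cSup_least)
  show "{z. AE x in lborel. x \<in> {a..b} \<longrightarrow> z \<le> w x} \<noteq> {}" using lower by auto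
  fix z assume "z \<in> {z. AE x in lborel. x \<in> {a..b} \<longrightarrow> z \<le> w x}"
  then have "AE x in lborel. x \<in> {a..b} \<longrightarrow> z \<le> w x" by simp
  then have "AE x in lborel. x \<in> {p..<q} \<longrightarrow> z \<le> w x" by (rule eventually_mono) (use pq(2) in auto)
  then show "z \<le> M" using AE_Ico_imp_ex[OF _ pq(1)] upper by (fastforce intro: order_trans)
qed

lemma A1_const_wN_le:
  assumes N: "2 \<le> N"
  shows "A1_const (wN N) \<le> ereal (300 * real N)"
  unfolding A1_const_def
proof (rule Inf_lower, simp, intro allI impI)
  fix a b :: real assume ab: "a < b"
  define m where "m = integral {a..b} (wN N) / (300 * real N * (b - a))"
  have pos: "0 < 300 * real N * (b - a)" using N ab by simp
  have "m \<le> wN N x" if "x \<in> {a..b}" for x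
    using integral_wN_le_average[OF N, of a x b] that pos unfolding m_def
    by (simp add: divide_le_eq algebra_simps)
  then have "m \<le> essinf_on a b (wN N)"
    by (intro essinf_on_ge[OF ab]) (use wN_bounded in auto)
  moreover have "integral {a..b} (wN N) / (b - a) = 300 * real N * m"
    using N ab unfolding m_def by (simp add: field_simps)
  ultimately show "(LINT x:{a..b}|lborel. wN N x) / (b - a) \<le> 300 * real N * essinf_on a b (wN N)"
    using N by (simp add: wN_set_lebesgue_integral[OF N] mult_left_mono)
qed

lemma essinf_on_wN_eq_1:
  assumes N: "2 \<le> N" and b: "4 \<le> b"
  shows "essinf_on 0 b (wN N) = 1"
proof (rule antisym)
  show "essinf_on 0 b (wN N) \<le> 1"
  proof (rule essinf_on_le[where p=0 and q=4 and m=1])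
    show "wN N x \<le> 1" if "x \<in> {0..<4}" for x
      using wN_eq_wbase[of x N] wbase_eq_1_below_4[of x N] two_power_mono[of 2 "N+1"] that N by simp
  qed (use b wN_ge_one[OF N] in auto)
  show "1 \<le> essinf_on 0 b (wN N)"
    using essinf_on_ge[of 0 b 1 "wN N"] b wN_ge_one[OF N] wN_bounded by force
qed

lemma integral_wN_ge_spike:
  assumes N: "2 \<le> N"
  shows "2^(N+1) * real N \<le> integral {0..2^N + real N} (wN N)"
proof -
  let ?b = "2^N + real N :: real" and ?spike = "\<lambda>x. (2::real)^(N+1) * indicator (Iint N) x"
  have spike: "(?spike has_integral 2^(N+1) * meas_in (Iint N) 0 ?b) {0..?b}"
    by (intro has_integral_mult_right indicator_has_integral_meas_in Iint_Int_lmeasurable)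
  have "Iint N \<subseteq> {0..?b}"
  proof
    fix x assume "x \<in> Iint N"
    then have "2^N \<le> x" "x < ?b" unfolding Iint_def by auto
    moreover have "(0::real) \<le> 2^N" by simp
    ultimately have "0 \<le> x" "x \<le> ?b" by linarith+
    then show "x \<in> {0..?b}" by simp
  qed
  then have "Iint N \<inter> {0..?b} = Iint N" by auto
  then have "meas_in (Iint N) 0 ?b = real N" unfolding meas_in_def Iint_def by simp
  moreover have "integral {0..?b} ?spike \<le> integral {0..?b} (wN N)"
  proof (rule integral_le)
    show "?spike x \<le> wN N x" if "x \<in> {0..?b}" for x
      using wN_ge_Iint[OF N order_refl, of x] wN_nonneg[OF N, of x] by (auto simp: indicator_def)
  qed (use spike wN_integrable_on[OF N] in blast)+
  ultimately show ?thesis using spike integral_unique by metis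
qed

text \<open>The average over \<open>[0, 2^N + N]\<close> sees the spike on \<open>I\<^sub>N\<close>, while the weight equals
  \<open>1\<close> near \<open>0\<close>.\<close>

lemma A1_const_wN_ge:
  assumes N: "2 \<le> N"
  shows "ereal (real N) \<le> A1_const (wN N)"
  unfolding A1_const_def
proof (rule Inf_greatest)
  fix y assume "y \<in> {ereal C |C. \<forall>a b. a < b \<longrightarrow>
    (LINT x:{a..b}|lborel. wN N x) / (b - a) \<le> C * essinf_on a b (wN N)}"
  then obtain C where y: "y = ereal C"
    and C: "\<And>a b. a < b \<Longrightarrow> (LINT x:{a..b}|lborel. wN N x) / (b - a) \<le> C * essinf_on a b (wN N)"
    by auto
  define b :: real where "b = 2^N + real N"
  have b: "0 < b" "b < 2^(N+1)" "4 \<le> b"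
    using real_lt_two_power[of N] two_power_mono[OF N] unfolding b_def by simp_all
  have "real N \<le> 2^(N+1) * real N / b"
  proof -
    have "real N * b \<le> real N * 2^(N+1)" using b by (intro mult_left_mono) auto
    then show ?thesis using b by (simp add: le_divide_eq algebra_simps)
  qed
  also have "\<dots> \<le> integral {0..b} (wN N) / b"
    using integral_wN_ge_spike[OF N] b(1) unfolding b_def by (simp add: divide_right_mono)
  also have "\<dots> \<le> C"
    using C[OF b(1)] essinf_on_wN_eq_1[OF N b(3)] by (simp add: wN_set_lebesgue_integral[OF N])
  finally show "ereal (real N) \<le> y" unfolding y by simp
qed

lemma integral_wN_unit_interval: "2 \<le> N \<Longrightarrow> (LINT x:{0..1}|lborel. wN N x) = 1"
proof -
  assume N: "2 \<le> N"
  have "integral {0..1} (wN N) = integral {0..1} (\<lambda>x::real. 1::real)"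
    by (rule integral_cong)
      (use wN_eq_wbase[of _ N] wbase_eq_1_below_4[of _ N] one_less_power[of "2::real" "N+1"] in auto)
  then show ?thesis using wN_set_lebesgue_integral[OF N] by simp
qed

lemma sum_Iint_length: "2 \<le> N \<Longrightarrow> (real N)^2 / 4 \<le> (\<Sum>k=2..N. measure lborel (Iint k))"
proof (induction N rule: dec_induct)
  case (step N)
  have "(real (Suc N))^2 / 4 \<le> real (Suc N) + (real N)^2 / 4"
    by (simp add: power2_eq_square algebra_simps)
  then show ?case using step by (simp add: Iint_def)
qed (simp add: Iint_def)

lemma wN_gt_on_Iint:
  assumes N: "2 \<le> N" and k: "k \<in> {2..N}" and x: "x \<in> Iint k"
  shows "x < wN N x"
proof -
  have x': "0 \<le> x" "x < 2^(k+1)"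
    using x Iint_subset_block[of k] by (auto intro: order_trans[OF zero_le_power])
  then have "wN N x = wbase N x" using wN_eq_wbase_below_block[of x k N] k by simp
  moreover have "2^(k+1) \<le> wbase N x" using wbase_ge_Iint[of k N x] k x by simp
  ultimately show ?thesis using x' by simp
qed

lemma emeasure_wN_gt_identity:
  assumes N: "2 \<le> N"
  shows "ennreal ((real N)^2 / 4) \<le> emeasure lborel {x. 1 < x \<and> x < wN N x}"
proof -
  have disjoint: "disjoint_family_on Iint {2..N}"
    unfolding disjoint_family_on_def
  proof (intro ballI impI)
    fix k k' assume "k \<in> {2..N}" "k' \<in> {2..N}" "k \<noteq> k'"
    then have "(2::real)^(k+1) \<le> 2^k' \<or> (2::real)^(k'+1) \<le> 2^k"
      by (metis Suc_eq_plus1 linorder_neqE_nat Suc_leI two_power_mono)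
    then show "Iint k \<inter> Iint k' = {}" using Iint_subset_block[of k] Iint_subset_block[of k'] by fastforce
  qed
  have "ennreal ((real N)^2 / 4) \<le> ennreal (\<Sum>k=2..N. measure lborel (Iint k))"
    using sum_Iint_length[OF N] by (rule ennreal_leI)
  also have "\<dots> = (\<Sum>k=2..N. emeasure lborel (Iint k))"
    by (subst sum_ennreal[symmetric]) (auto simp: Iint_def intro!: sum.cong)
  also have "\<dots> = emeasure lborel (\<Union>k\<in>{2..N}. Iint k)"
  proof (rule sum_emeasure)
    show "Iint ` {2..N} \<subseteq> sets lborel" by (auto simp: Iint_def)
  qed (use disjoint in simp_all)
  also have "\<dots> \<le> emeasure lborel {x. 1 < x \<and> x < wN N x}"
  proof (rule emeasure_mono)
    show "(\<Union>k\<in>{2..N}. Iint k) \<subseteq> {x. 1 < x \<and> x < wN N x}"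
    proof
      fix x assume "x \<in> (\<Union>k\<in>{2..N}. Iint k)"
      then obtain k where k: "k \<in> {2..N}" "x \<in> Iint k" by auto
      then have "(1::real) < 2^k" "2^k \<le> x" unfolding Iint_def by (auto simp: one_less_power)
      then show "x \<in> {x. 1 < x \<and> x < wN N x}" using wN_gt_on_Iint[OF N k] by simp
    qed
    show "{x. 1 < x \<and> x < wN N x} \<in> sets lborel" by measurable
  qed
  finally show ?thesis .
qed

theorem mainTheorem4:
  shows "\<exists>c1 c2 c3::real. 0 < c1 \<and> c1 \<le> c2 \<and> 0 < c3 \<and>
    (\<forall>N::nat. N > 20 \<longrightarrow>
      (LINT x:{0..1}|lborel. wN N x) = 1 \<and>
      ereal (c1 * real N) \<le> A1_const (wN N) \<and>
      A1_const (wN N) \<le> ereal (c2 * real N) \<and>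
      (\<Sum>k=2..N. measure lborel (Iint k)) \<ge> c3 * (real N)^2 \<and>
      (\<forall>k\<in>{2..N}. \<forall>x\<in>Iint k. wN N x > x) \<and>
      emeasure lborel {x. 1 < x \<and> wN N x > x} \<ge> ennreal (c3 * (real N)^2))"
proof -
  have "(LINT x:{0..1}|lborel. wN N x) = 1 \<and>
      ereal (1 * real N) \<le> A1_const (wN N) \<and>
      A1_const (wN N) \<le> ereal (300 * real N) \<and>
      (\<Sum>k=2..N. measure lborel (Iint k)) \<ge> 1/4 * (real N)^2 \<and>
      (\<forall>k\<in>{2..N}. \<forall>x\<in>Iint k. wN N x > x) \<and>
      emeasure lborel {x. 1 < x \<and> wN N x > x} \<ge> ennreal (1/4 * (real N)^2)" if "20 < N" for N
  proof -
    have N: "2 \<le> N" using that by simp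
    show ?thesis
      using integral_wN_unit_interval[OF N] A1_const_wN_ge[OF N] A1_const_wN_le[OF N]
        sum_Iint_length[OF N] wN_gt_on_Iint[OF N] emeasure_wN_gt_identity[OF N]
      by simp
  qed
  then show ?thesis by (intro exI[of _ 1] exI[of _ 300] exI[of _ "1/4"]) simp
qed

end
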